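(* Let $ABC$ be a nondegenerate triangle and $XYZ$ a Miquel triangle of a point $P$ relative to $ABC$. (i) If $P$ is the first Brocard point of $ABC$, then $P$ is the first Brocard point of $XYZ$, i.e. $\angle YXP=\angle ZYP=\angle XZP$. (ii) If $P$ is the second Brocard point of $ABC$, then $P$ is the second Brocard point of $XYZ$, i.e. $\angle PXZ=\angle PYX=\angle PZY$.
   Context: Miquel triangle: given a triangle $ABC$ and a point $P$ not on the lines $BC,CA,AB$, a triangle $XYZ$ with $X$ on line $BC$, $Y$ on line $CA$, $Z$ on line $AB$ is called a Miquel triangle of $P$ relative to $ABC$ if $P$ lies on each of the three circles through $A,Y,Z$, through $B,Z,X$, and through $C,X,Y$. First Brocard point of $ABC$: the point $P$ with $\angle BAP=\angle CBP=\angle ACP$; second Brocard point: the point $P$ with $\angle PAC=\angle PBA=\angle PCB$ (analogously for a triangle $XYZ$ with the vertex order $X,Y,Z$ in place of $A,B,C$). *)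

theory Defs
  imports "HOL-Analysis.Analysis"
begin

definition on_line :: "complex \<Rightarrow> complex \<Rightarrow> complex \<Rightarrow> bool" where
  "on_line X B C \<longleftrightarrow> B \<noteq> C \<and> collinear {B, C, X}"

definition nondeg_triangle :: "complex \<Rightarrow> complex \<Rightarrow> complex \<Rightarrow> bool" where
  "nondeg_triangle A B C \<longleftrightarrow> \<not> collinear {A, B, C}"

definition concyclic :: "complex \<Rightarrow> complex \<Rightarrow> complex \<Rightarrow> complex \<Rightarrow> bool" where
  "concyclic a b c d \<longleftrightarrow>
     (\<exists>ctr r. r > 0 \<and> dist a ctr = r \<and> dist b ctr = r \<and> dist c ctr = r \<and> dist d ctr = r)"

text \<open>Equality of directed angles modulo pi:
  the directed angle at vertex B from line BA to line BC equals
  the directed angle at vertex E from line ED to line EF.\<close>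
definition dangle_eq ::
  "complex \<Rightarrow> complex \<Rightarrow> complex \<Rightarrow> complex \<Rightarrow> complex \<Rightarrow> complex \<Rightarrow> bool" where
  "dangle_eq A B C D E F \<longleftrightarrow>
     A \<noteq> B \<and> C \<noteq> B \<and> D \<noteq> E \<and> F \<noteq> E \<and>
     Im (((C - B) / (A - B)) * cnj ((F - E) / (D - E))) = 0"

definition first_brocard :: "complex \<Rightarrow> complex \<Rightarrow> complex \<Rightarrow> complex \<Rightarrow> bool" where
  "first_brocard A B C P \<longleftrightarrow> dangle_eq B A P C B P \<and> dangle_eq C B P A C P"

definition second_brocard :: "complex \<Rightarrow> complex \<Rightarrow> complex \<Rightarrow> complex \<Rightarrow> bool" where
  "second_brocard A B C P \<longleftrightarrow> dangle_eq P A C P B A \<and> dangle_eq P B A P C B"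

definition miquel_triangle ::
  "complex \<Rightarrow> complex \<Rightarrow> complex \<Rightarrow> complex \<Rightarrow> complex \<Rightarrow> complex \<Rightarrow> complex \<Rightarrow> bool" where
  "miquel_triangle A B C P X Y Z \<longleftrightarrow>
     \<not> on_line P B C \<and> \<not> on_line P C A \<and> \<not> on_line P A B \<and>
     nondeg_triangle X Y Z \<and>
     on_line X B C \<and> on_line Y C A \<and> on_line Z A B \<and>
     concyclic A Y Z P \<and> concyclic B Z X P \<and> concyclic C X Y P"

end

theory Submission
  imports Defs
begin

text \<open>
  Let \<open>\<omega>\<close> be the Brocard angle of \<open>ABC\<close>. Since \<open>C, X, Y, P\<close> are concyclic and \<open>Y\<close> lies on
  \<open>CA\<close>, the inscribed angle theorem gives \<open>\<angle>YXP = \<angle>YCP = \<angle>ACP = \<omega>\<close> (directed, modulo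
  \<open>\<pi>\<close>); cyclically \<open>\<angle>ZYP = \<angle>BAP\<close> and \<open>\<angle>XZP = \<angle>CBP\<close>, so \<open>P\<close> is the first Brocard
  point of \<open>XYZ\<close>. When \<open>Y = C\<close> the circle \<open>CXYP\<close> says nothing about the line \<open>XY\<close>; then
  the Brocard condition makes \<open>AB\<close> tangent to the circle \<open>APC\<close> at \<open>A\<close>, forcing \<open>Z = A\<close>,
  and likewise \<open>X = B\<close>. The second Brocard point of \<open>ABC\<close> is the first one of \<open>ACB\<close>.
\<close>

text \<open>For \<open>b \<noteq> 0\<close> this says \<open>a / b \<in> \<real>\<close>; note that \<open>0\<close> is parallel to everything.\<close>

definition parallel :: "complex \<Rightarrow> complex \<Rightarrow> bool" where
  "parallel a b \<longleftrightarrow> Im (a * cnj b) = 0"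

lemma parallel_refl [simp]: "parallel a a"
  by (simp add: parallel_def)

lemma parallel_sym: "parallel a b \<Longrightarrow> parallel b a"
  by (simp add: parallel_def algebra_simps)

lemma parallel_0_left [simp]: "parallel 0 b"
  and parallel_0_right [simp]: "parallel a 0"
  by (simp_all add: parallel_def)

lemma parallel_minus_left_iff [simp]: "parallel (- a) b \<longleftrightarrow> parallel a b"
  by (auto simp: parallel_def)

lemma parallel_iff_Reals: "parallel a b \<longleftrightarrow> a * cnj b \<in> \<real>"
  by (simp add: parallel_def complex_is_Real_iff)

lemma parallel_mult:
  assumes "parallel a b" "parallel c d"
  shows "parallel (a * c) (b * d)"
proof -
  have "a * c * cnj (b * d) = (a * cnj b) * (c * cnj d)"
    by simp
  also have "\<dots> \<in> \<real>"
    using assms unfolding parallel_iff_Reals by (rule Reals_mult)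
  finally show ?thesis
    unfolding parallel_iff_Reals .
qed

lemma parallel_divide:
  assumes "parallel a b" "parallel c d"
  shows "parallel (a / c) (b / d)"
proof -
  have "a / c * cnj (b / d) = (a * cnj b) / (c * cnj d)"
    by (simp add: complex_cnj_divide)
  also have "\<dots> \<in> \<real>"
    using assms unfolding parallel_iff_Reals by (rule Reals_divide)
  finally show ?thesis
    unfolding parallel_iff_Reals .
qed

lemma parallel_inverse_iff: "parallel (1 / a) (1 / b) \<longleftrightarrow> parallel a b"
  using parallel_divide[of 1 1 a b] parallel_divide[of 1 1 "1 / a" "1 / b"] by auto

lemma parallel_diff: "parallel a c \<Longrightarrow> parallel b c \<Longrightarrow> parallel (a - b) c"
  by (simp add: parallel_def algebra_simps)

lemma mult_cnj_self_Reals: "z * cnj z \<in> \<real>"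
  by (metis complex_norm_square Reals_of_real)

lemma parallel_trans:
  assumes "parallel a b" "parallel b c" "b \<noteq> 0"
  shows "parallel a c"
proof -
  have "a * cnj c = (a * cnj b) * (b * cnj c) / (b * cnj b)"
    using assms(3) by (simp add: field_simps)
  also have "\<dots> \<in> \<real>"
    using assms(1,2) unfolding parallel_iff_Reals
    by (intro Reals_divide[OF Reals_mult mult_cnj_self_Reals])
  finally show ?thesis
    unfolding parallel_iff_Reals .
qed

lemma parallel_iff_divide_Reals:
  assumes "b \<noteq> 0"
  shows "parallel a b \<longleftrightarrow> a / b \<in> \<real>"
proof
  assume "parallel a b"
  have "a / b = (a * cnj b) / (b * cnj b)"
    using assms by (simp add: field_simps)
  also have "\<dots> \<in> \<real>"
    using \<open>parallel a b\<close> unfolding parallel_iff_Reals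
    by (rule Reals_divide[OF _ mult_cnj_self_Reals])
  finally show "a / b \<in> \<real>" .
next
  assume "a / b \<in> \<real>"
  have "a * cnj b = (a / b) * (b * cnj b)"
    using assms by (simp add: field_simps)
  also have "\<dots> \<in> \<real>"
    using \<open>a / b \<in> \<real>\<close> by (rule Reals_mult[OF _ mult_cnj_self_Reals])
  finally show "parallel a b"
    unfolding parallel_iff_Reals .
qed

lemma collinear_iff_parallel: "collinear {B, C, X} \<longleftrightarrow> parallel (X - B) (C - B)"
proof (cases "C = B")
  case False
  have "collinear {B, C, X} \<longleftrightarrow> collinear {C, B, X}"
    by (simp add: insert_commute)
  also have "\<dots> \<longleftrightarrow> collinear {0, C - B, X - B}"
    by (cases "B = 0") (auto simp: collinear_3)
  finally show ?thesis
    using False by (simp add: collinear_iff_Reals parallel_iff_divide_Reals)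
qed (simp add: collinear_2)

lemma dangle_eq_iff_parallel:
  "dangle_eq A B C D E F \<longleftrightarrow>
     A \<noteq> B \<and> C \<noteq> B \<and> D \<noteq> E \<and> F \<noteq> E \<and> parallel ((C - B) / (A - B)) ((F - E) / (D - E))"
  by (simp add: dangle_eq_def parallel_def)

lemma dangle_eq_sym: "dangle_eq A B C D E F \<Longrightarrow> dangle_eq D E F A B C"
  by (auto simp: dangle_eq_iff_parallel intro: parallel_sym)

lemma dangle_eq_trans:
  "dangle_eq A B C D E F \<Longrightarrow> dangle_eq D E F G H I \<Longrightarrow> dangle_eq A B C G H I"
  by (auto simp: dangle_eq_iff_parallel elim: parallel_trans)

lemma dangle_eq_reverse_iff: "dangle_eq C B A F E D \<longleftrightarrow> dangle_eq A B C D E F"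
  using parallel_inverse_iff[of "(C - B) / (A - B)" "(F - E) / (D - E)"]
  by (auto simp: dangle_eq_iff_parallel)

lemma concyclic_iff_sphere:
  "concyclic a b c d \<longleftrightarrow> (\<exists>ctr r. r > 0 \<and> {a, b, c, d} \<subseteq> sphere ctr r)"
  by (simp add: concyclic_def dist_commute)

text \<open>The factor \<open>y / p\<close> does not depend on \<open>x\<close>: this is the inscribed angle theorem.\<close>

lemma cnj_chord_ratio:
  assumes "{x, y, p} \<subseteq> sphere 0 r" "x \<noteq> y" "x \<noteq> p"
  shows "cnj ((p - x) / (y - x)) = (p - x) / (y - x) * y / p"
proof -
  have "r \<noteq> 0"
    using assms by auto
  have cnj_eq: "cnj z = of_real (r\<^sup>2) / z" if "z \<in> sphere 0 r" for z
  proof -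
    have "z * cnj z = of_real (r\<^sup>2)"
      using that complex_norm_square[of z] by simp
    moreover have "z \<noteq> 0"
      using that \<open>r \<noteq> 0\<close> by auto
    ultimately show ?thesis
      by (simp add: field_simps)
  qed
  have cnj_xyp: "cnj x = of_real (r\<^sup>2) / x" "cnj y = of_real (r\<^sup>2) / y" "cnj p = of_real (r\<^sup>2) / p"
    using assms(1) by (simp_all add: cnj_eq)
  have "x \<noteq> 0" "y \<noteq> 0" "p \<noteq> 0"
    using assms \<open>r \<noteq> 0\<close> by auto
  then show ?thesis
    unfolding complex_cnj_divide complex_cnj_diff cnj_xyp
    using assms(2,3) \<open>r \<noteq> 0\<close> by (simp add: field_simps)
qed

lemma inscribed_angle:
  assumes "{V, W, Q, P} \<subseteq> sphere ctr r" "V \<noteq> Q" "V \<noteq> P" "W \<noteq> Q" "W \<noteq> P"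
  shows "parallel ((P - V) / (Q - V)) ((P - W) / (Q - W))"
proof -
  define q where "q = (\<lambda>U. (P - U) / (Q - U))"
  have sphere0: "U - ctr \<in> sphere 0 r" if "U \<in> sphere ctr r" for U
    using that by (simp add: dist_norm norm_minus_commute)
  have "cnj (q U) = q U * ((Q - ctr) / (P - ctr))" if "U \<in> {V, W}" for U
    using cnj_chord_ratio[of "U - ctr" "Q - ctr" "P - ctr" r] that assms sphere0
    by (auto simp: q_def)
  then have "cnj (q V * cnj (q W)) = q V * cnj (q W)"
    by (simp only: complex_cnj_mult complex_cnj_cnj insert_iff) (simp add: mult_ac)
  then have "q V * cnj (q W) \<in> \<real>"
    by (simp only: Reals_cnj_iff)
  then show ?thesis
    by (simp only: parallel_iff_Reals q_def)
qed

text \<open>The last hypothesis is the tangent--chord angle condition: \<open>AB\<close> touches the circle \<open>ACP\<close>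
  at \<open>A\<close>, so this circle meets the line \<open>AB\<close> only at \<open>A\<close>.\<close>

lemma tangent_chord_angle_imp_eq:
  assumes "{A, C, Z, P} \<subseteq> sphere ctr r" "parallel (Z - A) (B - A)" "\<not> parallel (P - A) (B - A)"
    and "C \<noteq> A" "C \<noteq> P" "parallel ((P - A) / (B - A)) ((P - C) / (A - C))"
  shows "Z = A"
proof (rule ccontr)
  assume "Z \<noteq> A"
  have "B \<noteq> A" "Z \<noteq> P"
    using assms(2,3) by auto
  have "parallel ((P - Z) / (A - Z)) ((P - C) / (A - C))"
    using assms(1,4,5) \<open>Z \<noteq> A\<close> \<open>Z \<noteq> P\<close>
    by (intro inscribed_angle[of Z C A P ctr r]) (auto simp: insert_commute)
  then have "parallel ((P - Z) / (A - Z)) ((P - A) / (B - A))"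
    using parallel_sym[OF assms(6)] assms(4,5) by (auto elim: parallel_trans)
  moreover have "parallel (A - Z) (B - A)"
    using assms(2) parallel_minus_left_iff[of "Z - A"] by simp
  ultimately have "parallel ((P - Z) / (A - Z) * (A - Z)) ((P - A) / (B - A) * (B - A))"
    by (rule parallel_mult)
  then have "parallel (P - Z) (P - A)"
    using \<open>Z \<noteq> A\<close> \<open>B \<noteq> A\<close> by simp
  then have "parallel ((P - A) - (P - Z)) (P - A)"
    by (rule parallel_diff[OF parallel_refl])
  then have "parallel (P - A) (Z - A)"
    by (simp add: parallel_sym)
  then have "parallel (P - A) (B - A)"
    using assms(2) \<open>Z \<noteq> A\<close> by (auto elim: parallel_trans)
  with assms(3) show False ..
qed

lemma nondeg_triangle_distinct: "nondeg_triangle A B C \<Longrightarrow> A \<noteq> B \<and> B \<noteq> C \<and> C \<noteq> A"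
  by (auto simp: nondeg_triangle_def collinear_2 insert_commute)

lemma miquel_angle_eq_brocard_angle:
  assumes "nondeg_triangle A B C" "miquel_triangle A B C P X Y Z" "first_brocard A B C P"
  shows "dangle_eq Y X P A C P"
proof -
  have "A \<noteq> B" "B \<noteq> C" "C \<noteq> A" "X \<noteq> Y"
    using assms(1,2) nondeg_triangle_distinct unfolding miquel_triangle_def by blast+
  have P_off: "\<not> parallel (P - B) (C - B)" "\<not> parallel (P - C) (A - C)" "\<not> parallel (P - A) (B - A)"
    and on_sides: "parallel (X - B) (C - B)" "parallel (Y - C) (A - C)" "parallel (Z - A) (B - A)"
    and circles: "concyclic A Y Z P" "concyclic B Z X P" "concyclic C X Y P"
    using assms(2) \<open>A \<noteq> B\<close> \<open>B \<noteq> C\<close> \<open>C \<noteq> A\<close>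
    unfolding miquel_triangle_def on_line_def collinear_iff_parallel by auto
  have brocard: "parallel ((P - A) / (B - A)) ((P - B) / (C - B))"
    "parallel ((P - B) / (C - B)) ((P - C) / (A - C))"
    using assms(3) unfolding first_brocard_def dangle_eq_iff_parallel by auto
  have "P \<noteq> A" "P \<noteq> B" "P \<noteq> C" "P \<noteq> X"
    using P_off on_sides by auto
  have "parallel ((P - X) / (Y - X)) ((P - C) / (A - C))"
  proof (cases "Y = C")
    case False
    have CY: "parallel ((P - C) / (Y - C)) ((P - C) / (A - C))"
      using parallel_divide[OF parallel_refl on_sides(2)] .
    show ?thesis
    proof (cases "X = C")
      case False
      obtain ctr r where "{X, C, Y, P} \<subseteq> sphere ctr r"
        using circles(3) unfolding concyclic_iff_sphere by (auto simp: insert_commute)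
      then have "parallel ((P - X) / (Y - X)) ((P - C) / (Y - C))"
        using False \<open>Y \<noteq> C\<close> \<open>X \<noteq> Y\<close> \<open>P \<noteq> X\<close> \<open>P \<noteq> C\<close> by (intro inscribed_angle) auto
      then show ?thesis
        using CY \<open>Y \<noteq> C\<close> \<open>P \<noteq> C\<close> by (auto elim: parallel_trans)
    qed (use CY in simp)
  next
    case True
    obtain ctr r where "{A, C, Z, P} \<subseteq> sphere ctr r"
      using circles(1) True unfolding concyclic_iff_sphere by auto
    moreover have "parallel ((P - A) / (B - A)) ((P - C) / (A - C))"
      using brocard \<open>P \<noteq> B\<close> \<open>B \<noteq> C\<close> by (auto elim: parallel_trans)
    ultimately have "Z = A"
      using on_sides(3) P_off(3) \<open>C \<noteq> A\<close> \<open>P \<noteq> C\<close> by (intro tangent_chord_angle_imp_eq) auto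
    obtain ctr' r' where "{B, A, X, P} \<subseteq> sphere ctr' r'"
      using circles(2) \<open>Z = A\<close> unfolding concyclic_iff_sphere by auto
    then have "X = B"
      using on_sides(1) P_off(1) \<open>A \<noteq> B\<close> \<open>P \<noteq> A\<close> parallel_sym[OF brocard(1)]
      by (intro tangent_chord_angle_imp_eq) auto
    show ?thesis
      using brocard(2) True \<open>X = B\<close> by simp
  qed
  then show ?thesis
    using \<open>X \<noteq> Y\<close> \<open>P \<noteq> X\<close> \<open>C \<noteq> A\<close> \<open>P \<noteq> C\<close> by (simp add: dangle_eq_iff_parallel)
qed

lemma nondeg_triangle_rotate: "nondeg_triangle A B C \<Longrightarrow> nondeg_triangle B C A"
  and nondeg_triangle_swap: "nondeg_triangle A B C \<Longrightarrow> nondeg_triangle A C B"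
  by (simp_all add: nondeg_triangle_def insert_commute)

lemma miquel_triangle_rotate: "miquel_triangle A B C P X Y Z \<Longrightarrow> miquel_triangle B C A P Y Z X"
  and miquel_triangle_swap: "miquel_triangle A B C P X Y Z \<Longrightarrow> miquel_triangle A C B P X Z Y"
  by (auto simp: miquel_triangle_def on_line_def concyclic_def nondeg_triangle_def insert_commute)

lemma first_brocard_rotate: "first_brocard A B C P \<Longrightarrow> first_brocard B C A P"
  unfolding first_brocard_def by (blast intro: dangle_eq_sym dangle_eq_trans)

lemma second_brocard_iff_first_brocard: "second_brocard A B C P \<longleftrightarrow> first_brocard A C B P"
  unfolding second_brocard_def first_brocard_def
  by (metis dangle_eq_reverse_iff dangle_eq_sym dangle_eq_trans)

lemma first_brocard_miquel_triangle:
  assumes "nondeg_triangle A B C" "miquel_triangle A B C P X Y Z" "first_brocard A B C P"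
  shows "first_brocard X Y Z P"
proof -
  have "dangle_eq Y X P A C P"
    using assms by (rule miquel_angle_eq_brocard_angle)
  moreover have "dangle_eq Z Y P B A P"
    using nondeg_triangle_rotate[OF assms(1)] miquel_triangle_rotate[OF assms(2)]
      first_brocard_rotate[OF assms(3)] by (rule miquel_angle_eq_brocard_angle)
  moreover have "dangle_eq X Z P C B P"
    using nondeg_triangle_rotate[OF nondeg_triangle_rotate[OF assms(1)]]
      miquel_triangle_rotate[OF miquel_triangle_rotate[OF assms(2)]]
      first_brocard_rotate[OF first_brocard_rotate[OF assms(3)]]
    by (rule miquel_angle_eq_brocard_angle)
  ultimately show ?thesis
    using assms(3)
    unfolding first_brocard_def by (meson dangle_eq_sym dangle_eq_trans)
qed

theorem theorem8:
  fixes A B C P X Y Z :: complex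
  assumes "nondeg_triangle A B C"
    and "miquel_triangle A B C P X Y Z"
  shows "(first_brocard A B C P \<longrightarrow> first_brocard X Y Z P)
       \<and> (second_brocard A B C P \<longrightarrow> second_brocard X Y Z P)"
  using first_brocard_miquel_triangle[OF assms]
    first_brocard_miquel_triangle[OF nondeg_triangle_swap[OF assms(1)] miquel_triangle_swap[OF assms(2)]]
  by (simp add: second_brocard_iff_first_brocard)

end
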